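(* Let $m\ge3$. For any $k_1,k_2>0$, as $\epsilon\to0$, \[\mu_m^H(\Pi(k_1\epsilon,k_2\epsilon))\to\frac{\frac{k_2}{k_1}\gamma^{\frac{m-2}{2}}}{1+\frac{k_2}{k_1}\gamma^{\frac{m-2}{2}}},\qquad \mu_1^L(\Pi(k_1\epsilon,k_2\epsilon))\to\frac{\frac{k_1}{k_2}\gamma^{\frac{m-2}{2}}}{1+\frac{k_1}{k_2}\gamma^{\frac{m-2}{2}}}.\]
   Context: The state of nature is $\theta\in\{H,L\}$. $S$ is a finite signal set; conditional on $\theta$, signals are i.i.d. with distribution $\pi_\theta$, $\pi_\theta(s)>0$ for all $s,\theta$, $\pi_H\ne\pi_L$. Let $\bar\ell=\max_s\pi_H(s)/\pi_L(s)$, $\underline\ell=\min_s\pi_H(s)/\pi_L(s)$, $\gamma=\bar\ell/\underline\ell>1$; fix a signal $h$ with $\pi_H(h)/\pi_L(h)=\bar\ell$ and a signal $l$ with $\pi_H(l)/\pi_L(l)=\underline\ell$. A protocol on $M=\{1,\dots,m\}$ is $\Pi=(f,g,a)$ with $f:M\times S\to\Delta(M)$, $g\in\Delta(M)$, $a:M\to[0,1]$. For small $\epsilon_1,\epsilon_2>0$ define $\Pi(\epsilon_1,\epsilon_2)$ by: $g(2)=1$; $a(m)=1$ and $a(i)=0$ for $i\ne m$; with $c_h=(\pi_H(h)\pi_L(h))^{(m-2)/2}$ and $c_l=(\pi_H(l)\pi_L(l))^{(m-2)/2}$: states $1$ and $m$ are absorbing ($f(i,s)(i)=1$ for $i\in\{1,m\}$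 and all $s$); on signal $l$: from state $2$ move to $1$ with probability $c_h\epsilon_1$ and stay at $2$ otherwise, and from each state $i\in\{3,\dots,m-1\}$ move to $i-1$; on signal $h$: from state $m-1$ move to $m$ with probability $c_l\epsilon_2$ and stay at $m-1$ otherwise, and from each state $i\in\{2,\dots,m-2\}$ move to $i+1$; on any other signal, every state stays where it is. For this (parsimonious) protocol, $\mu_1^\theta(\Pi),\mu_m^\theta(\Pi)$ denote the probabilities that the Markov chain started at $m_0=2$, with signals drawn i.i.d. from $\pi_\theta$, is absorbed in state $1$ and state $m$ respectively. *)

theory Defs
  imports Complex_Main
begin

text \<open>States are the naturals 1..m; signals form a finite type.  The protocol
  Pi(e1,e2) is given by its transition kernel: proto_f ... i s j is the probability
  of moving from state i to state j on signal s.  The arguments piH piL h l fix the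
  constants c_h and c_l and the distinguished signals h, l.\<close>

definition c_const :: "('s \<Rightarrow> real) \<Rightarrow> ('s \<Rightarrow> real) \<Rightarrow> 's \<Rightarrow> nat \<Rightarrow> real" where
  "c_const piH piL s m = (piH s * piL s) powr ((real m - 2) / 2)"

definition proto_f ::
  "('s \<Rightarrow> real) \<Rightarrow> ('s \<Rightarrow> real) \<Rightarrow> 's \<Rightarrow> 's \<Rightarrow> nat \<Rightarrow> real \<Rightarrow> real \<Rightarrow> nat \<Rightarrow> 's \<Rightarrow> nat \<Rightarrow> real" where
  "proto_f piH piL h l m e1 e2 i s j =
     (if i = 1 \<or> i = m then (if j = i then 1 else 0)
      else if s = l then
        (if i = 2 then
           (if j = 1 then c_const piH piL h m * e1
            else if j = 2 then 1 - c_const piH piL h m * e1 else 0)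
         else (if j = i - 1 then 1 else 0))
      else if s = h then
        (if i = m - 1 then
           (if j = m then c_const piH piL l m * e2
            else if j = m - 1 then 1 - c_const piH piL l m * e2 else 0)
         else (if j = i + 1 then 1 else 0))
      else (if j = i then 1 else 0))"

text \<open>Distribution of the state after n signals, with signals i.i.d. from p
  (the signal distribution in the true state), started at m0 = 2.\<close>

fun state_dist ::
  "('s::finite \<Rightarrow> real) \<Rightarrow> ('s \<Rightarrow> real) \<Rightarrow> 's \<Rightarrow> 's \<Rightarrow> nat \<Rightarrow> real \<Rightarrow> real \<Rightarrow> ('s \<Rightarrow> real)
     \<Rightarrow> nat \<Rightarrow> nat \<Rightarrow> real" where
  "state_dist piH piL h l m e1 e2 p 0 j = (if j = 2 then 1 else 0)"
| "state_dist piH piL h l m e1 e2 p (Suc n) j =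
     (\<Sum>i\<in>{1..m}. state_dist piH piL h l m e1 e2 p n i *
        (\<Sum>s\<in>UNIV. p s * proto_f piH piL h l m e1 e2 i s j))"

definition absorb_prob ::
  "('s::finite \<Rightarrow> real) \<Rightarrow> ('s \<Rightarrow> real) \<Rightarrow> 's \<Rightarrow> 's \<Rightarrow> nat \<Rightarrow> real \<Rightarrow> real \<Rightarrow> ('s \<Rightarrow> real)
     \<Rightarrow> nat \<Rightarrow> real" where
  "absorb_prob piH piL h l m e1 e2 p j = lim (\<lambda>n. state_dist piH piL h l m e1 e2 p n j)"

end

theory Submission
  imports Defs
begin

text \<open>Between the absorbing states 1 and m the protocol is a birth-death chain.  Its absorption
  probabilities are read off a harmonic function w with w 1 = 0 and w 2 = 1: the expectation of w
  under the state distribution is conserved while the interior states lose all their mass, so the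
  chain is absorbed at m with probability 1 / w m.  Balancing the probability flows between
  neighbouring states gives w m = 1 + c_h e1 S + (c_h e1 / (c_l e2)) \<rho>^(m-2), where
  \<rho> = p_l / p_h and S does not depend on e1, e2.  For e1 = k1 \<epsilon> and e2 = k2 \<epsilon> the middle term
  vanishes as \<epsilon> \<rightarrow> 0 and the last one is constant; the normalisation of c_h and c_l makes it
  (k1 / k2) \<gamma>^(-(m-2)/2) when the signals are drawn from \<pi>_H and (k1 / k2) \<gamma>^((m-2)/2) when
  they are drawn from \<pi>_L.\<close>

lemma sum_if_one_point:
  fixes v :: "'a \<Rightarrow> real"
  assumes "finite S" "a \<in> S"
  shows "(\<Sum>j\<in>S. (if j = a then 1 else 0) * v j) = v a"
  using assms by (simp add: if_distrib[of "\<lambda>x. x * v _"] sum.If_cases Int_absorb1)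

lemma sum_if_two_points:
  fixes v :: "'a \<Rightarrow> real"
  assumes "finite S" "a \<in> S" "b \<in> S" "a \<noteq> b"
  shows "(\<Sum>j\<in>S. (if j = a then x else if j = b then y else 0) * v j) = x * v a + y * v b"
  using assms by (simp add: if_distrib[of "\<lambda>x. x * v _"] sum.If_cases Int_absorb1 Diff_eq)

lemma sum_weighted_if_two_points:
  fixes p :: "'a::finite \<Rightarrow> real"
  assumes "sum p UNIV = 1" "a \<noteq> b"
  shows "(\<Sum>s\<in>UNIV. p s * (if s = a then x else if s = b then y else z))
    = z + p a * (x - z) + p b * (y - z)"
proof -
  have "(\<Sum>s\<in>UNIV. p s * (if s = a then x else if s = b then y else z))
      = (\<Sum>s\<in>UNIV. p s * z + (if s = a then x - z else if s = b then y - z else 0) * p s)"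
    by (rule sum.cong) (auto simp: algebra_simps)
  also have "\<dots> = z + (x - z) * p a + (y - z) * p b"
    using assms by (simp add: sum.distrib sum_if_two_points flip: sum_distrib_right)
  finally show ?thesis by (simp add: algebra_simps)
qed

lemma harmonic_expectation_invariant:
  fixes D :: "nat \<Rightarrow> 'a \<Rightarrow> real" and K :: "'a \<Rightarrow> 'a \<Rightarrow> real"
  assumes D_Suc: "\<And>n j. D (Suc n) j = (\<Sum>i\<in>S. D n i * K i j)"
    and harmonic: "\<And>i. i \<in> S \<Longrightarrow> (\<Sum>j\<in>S. K i j * v j) = v i"
  shows "(\<Sum>j\<in>S. D n j * v j) = (\<Sum>j\<in>S. D 0 j * v j)"
proof (induction n)
  case (Suc n)
  have "(\<Sum>j\<in>S. D (Suc n) j * v j) = (\<Sum>i\<in>S. D n i * (\<Sum>j\<in>S. K i j * v j))"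
    unfolding D_Suc sum_distrib_right sum_distrib_left mult.assoc by (rule sum.swap)
  also have "\<dots> = (\<Sum>i\<in>S. D n i * v i)"
    using harmonic by simp
  finally show ?case
    using Suc.IH by simp
qed simp

lemma tendsto_zero_of_bounded_accumulation:
  fixes x y :: "nat \<Rightarrow> real"
  assumes "\<And>n. 0 \<le> y n" "\<And>n. x n \<le> b" "\<And>n. x n + c * y n \<le> x (Suc n)" "0 < c"
  shows "y \<longlonglongrightarrow> 0"
proof -
  have acc: "c * (\<Sum>k<n. y k) \<le> x n - x 0" for n
  proof (induction n)
    case (Suc n)
    then show ?case
      using assms(3)[of n] by (simp add: distrib_left)
  qed simp
  have "(\<Sum>k<n. y k) \<le> (b - x 0) / c" for n
    using acc[of n] assms(2)[of n] \<open>0 < c\<close> by (simp add: pos_le_divide_eq mult.commute)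
  then have "summable y"
    using assms(1) by (rule summableI_nonneg_bounded[rotated])
  then show ?thesis
    by (rule summable_LIMSEQ_zero)
qed

lemma tendsto_zero_of_le_shift:
  fixes x y :: "nat \<Rightarrow> real"
  assumes "\<And>n. 0 \<le> y n" "\<And>n. c * y n \<le> x (Suc n)" "x \<longlonglongrightarrow> 0" "0 < c"
  shows "y \<longlonglongrightarrow> 0"
proof (rule tendsto_sandwich)
  show "\<forall>\<^sub>F n in sequentially. 0 \<le> y n" "\<forall>\<^sub>F n in sequentially. y n \<le> x (Suc n) / c"
    using assms(1,2,4) by (simp_all add: field_simps mult.commute)
  show "(\<lambda>n. x (Suc n) / c) \<longlonglongrightarrow> 0"
    using tendsto_divide_zero[OF LIMSEQ_Suc[OF assms(3)]] .
qed simp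

locale protocol_walk =
  fixes piH piL :: "'s::finite \<Rightarrow> real" and h l :: 's and m :: nat and e1 e2 :: real
    and p :: "'s \<Rightarrow> real"
  assumes m_ge_3: "m \<ge> 3" and h_ne_l: "h \<noteq> l"
    and p_nonneg: "\<And>s. 0 \<le> p s" and p_l_pos: "0 < p l" and p_h_pos: "0 < p h"
    and p_sum: "sum p UNIV = 1"
    and A_pos: "0 < c_const piH piL h m * e1" and A_le_1: "c_const piH piL h m * e1 \<le> 1"
    and B_pos: "0 < c_const piH piL l m * e2" and B_le_1: "c_const piH piL l m * e2 \<le> 1"
begin

abbreviation "A \<equiv> c_const piH piL h m * e1"
abbreviation "B \<equiv> c_const piH piL l m * e2"
abbreviation "pf \<equiv> proto_f piH piL h l m e1 e2"
abbreviation "D \<equiv> state_dist piH piL h l m e1 e2 p"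

definition kernel :: "nat \<Rightarrow> nat \<Rightarrow> real" where
  "kernel i j = (\<Sum>s\<in>UNIV. p s * pf i s j)"

definition harmonic :: "(nat \<Rightarrow> real) \<Rightarrow> bool" where
  "harmonic v \<longleftrightarrow> (\<forall>i\<in>{1..m}. (\<Sum>j\<in>{1..m}. kernel i j * v j) = v i)"

lemma D_Suc: "D (Suc n) j = (\<Sum>i\<in>{1..m}. D n i * kernel i j)"
  by (simp add: kernel_def)

lemma proto_f_nonneg: "0 \<le> pf i s j"
  using A_pos A_le_1 B_pos B_le_1 unfolding proto_f_def by (smt (verit))

lemma kernel_nonneg: "0 \<le> kernel i j"
  unfolding kernel_def by (intro sum_nonneg mult_nonneg_nonneg p_nonneg proto_f_nonneg)

lemma proto_f_le_kernel: "p s * pf i s j \<le> kernel i j"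
  unfolding kernel_def by (rule member_le_sum) (auto intro: mult_nonneg_nonneg p_nonneg proto_f_nonneg)

lemma D_nonneg: "0 \<le> D n j"
proof (induction n arbitrary: j)
  case (Suc n)
  then show ?case
    unfolding D_Suc by (intro sum_nonneg mult_nonneg_nonneg kernel_nonneg)
qed simp

lemma kernel_expectation:
  "(\<Sum>j\<in>{1..m}. kernel i j * v j) = (\<Sum>s\<in>UNIV. p s * (\<Sum>j\<in>{1..m}. pf i s j * v j))"
  unfolding kernel_def sum_distrib_right sum_distrib_left mult.assoc by (rule sum.swap)

lemma proto_f_expectation_absorbing:
  assumes "i = 1 \<or> i = m"
  shows "(\<Sum>j\<in>{1..m}. pf i s j * v j) = v i"
  using assms m_ge_3 by (auto simp: proto_f_def sum_if_one_point)

lemma proto_f_expectation_interior: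
  assumes "2 \<le> i" "i \<le> m - 1"
  shows "(\<Sum>j\<in>{1..m}. pf i s j * v j) =
    (if s = l then v i - (if i = 2 then A else 1) * (v i - v (i - 1))
     else if s = h then v i + (if i = m - 1 then B else 1) * (v (i + 1) - v i)
     else v i)"
proof -
  have i: "i \<noteq> 1" "i \<noteq> m" "i - 1 \<in> {1..m}" "i \<in> {1..m}" "i + 1 \<in> {1..m}"
    using assms by auto
  have ends: "1 \<in> {1..m}" "2 \<in> {1..m}" "m \<in> {1..m}" "m - 1 \<in> {1..m}" "m \<noteq> m - 1"
    using m_ge_3 by auto
  consider "s = l" "i = 2" | "s = l" "i \<noteq> 2" | "s = h" "i = m - 1" | "s = h" "i \<noteq> m - 1"
    | "s \<noteq> l" "s \<noteq> h"
    by blast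
  then show ?thesis
  proof cases
    case 1
    then show ?thesis
      using i ends by (simp add: proto_f_def sum_if_two_points) (simp add: algebra_simps)
  next
    case 3
    then show ?thesis
      using i ends h_ne_l by (simp add: proto_f_def sum_if_two_points) (simp add: algebra_simps)
  qed (use i h_ne_l in \<open>simp_all add: proto_f_def sum_if_one_point\<close>)
qed

lemma kernel_expectation_absorbing:
  assumes "i = 1 \<or> i = m"
  shows "(\<Sum>j\<in>{1..m}. kernel i j * v j) = v i"
  unfolding kernel_expectation proto_f_expectation_absorbing[OF assms]
  by (simp add: p_sum flip: sum_distrib_right)

lemma kernel_expectation_interior:
  assumes "2 \<le> i" "i \<le> m - 1"
  shows "(\<Sum>j\<in>{1..m}. kernel i j * v j) = v i
    - p l * (if i = 2 then A else 1) * (v i - v (i - 1))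
    + p h * (if i = m - 1 then B else 1) * (v (i + 1) - v i)"
  unfolding kernel_expectation proto_f_expectation_interior[OF assms]
    sum_weighted_if_two_points[OF p_sum h_ne_l[symmetric]]
  by (simp add: algebra_simps)

lemma harmonic_const: "harmonic (\<lambda>_. c)"
  unfolding harmonic_def
proof
  fix i assume "i \<in> {1..m}"
  then consider "i = 1 \<or> i = m" | "2 \<le> i" "i \<le> m - 1"
    by fastforce
  then show "(\<Sum>j\<in>{1..m}. kernel i j * c) = c"
    by cases (simp_all only: kernel_expectation_absorbing kernel_expectation_interior, simp)
qed

lemma D_expectation:
  assumes "harmonic v"
  shows "(\<Sum>j\<in>{1..m}. D n j * v j) = v 2"
proof -
  have "(\<Sum>j\<in>{1..m}. D n j * v j) = (\<Sum>j\<in>{1..m}. D 0 j * v j)"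
    using assms unfolding harmonic_def
    by (intro harmonic_expectation_invariant[where K = kernel] D_Suc) blast
  also have "\<dots> = v 2"
    using m_ge_3 by (simp add: sum_if_one_point)
  finally show ?thesis .
qed

lemma D_le_1: "D n 1 \<le> 1"
proof -
  have "D n 1 \<le> (\<Sum>j\<in>{1..m}. D n j * 1)"
    using m_ge_3 by (simp add: member_le_sum D_nonneg)
  also have "\<dots> = 1"
    using D_expectation[OF harmonic_const] .
  finally show ?thesis .
qed

lemma D_le_D_Suc: "i \<in> {1..m} \<Longrightarrow> D n i * kernel i j \<le> D (Suc n) j"
  unfolding D_Suc by (rule member_le_sum) (auto intro: mult_nonneg_nonneg D_nonneg kernel_nonneg)

lemma D_1_accumulates: "D n 1 + p l * A * D n 2 \<le> D (Suc n) 1"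
proof -
  have "kernel 1 1 = 1"
    by (simp add: kernel_def proto_f_def p_sum)
  moreover have "p l * A \<le> kernel 2 1"
    using proto_f_le_kernel[of l 2 1] m_ge_3 by (simp add: proto_f_def)
  ultimately have "D n 1 + p l * A * D n 2 \<le> (\<Sum>i\<in>{1, 2}. D n i * kernel i 1)"
    using mult_left_mono[OF _ D_nonneg, of "p l * A" "kernel 2 1" n 2] by (simp add: mult.commute)
  also have "\<dots> \<le> (\<Sum>i\<in>{1..m}. D n i * kernel i 1)"
    using m_ge_3 by (intro sum_mono2) (auto intro: mult_nonneg_nonneg D_nonneg kernel_nonneg)
  finally show ?thesis
    unfolding D_Suc .
qed

lemma D_Suc_ge_down:
  assumes "2 \<le> j" "j + 1 \<le> m - 1"
  shows "p l * D n (j + 1) \<le> D (Suc n) j"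
proof -
  have "pf (j + 1) l j = 1"
    using assms by (auto simp: proto_f_def)
  then have "p l \<le> kernel (j + 1) j"
    using proto_f_le_kernel[of l "j + 1" j] by simp
  then have "p l * D n (j + 1) \<le> D n (j + 1) * kernel (j + 1) j"
    by (simp add: mult_left_mono D_nonneg mult.commute[of "p l"])
  also have "\<dots> \<le> D (Suc n) j"
    using assms by (intro D_le_D_Suc) auto
  finally show ?thesis .
qed

lemma D_transient_tendsto_zero:
  assumes "2 \<le> j" "j \<le> m - 1"
  shows "(\<lambda>n. D n j) \<longlonglongrightarrow> 0"
  using assms
proof (induction j rule: nat_induct_at_least)
  case base
  show ?case
  proof (rule tendsto_zero_of_bounded_accumulation)
    show "0 \<le> D n 2" "D n 1 \<le> 1" "D n 1 + p l * A * D n 2 \<le> D (Suc n) 1" for n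
      by (rule D_nonneg, rule D_le_1, rule D_1_accumulates)
    show "0 < p l * A"
      using p_l_pos A_pos by simp
  qed
next
  case (Suc j)
  show ?case
  proof (rule tendsto_zero_of_le_shift)
    show "0 \<le> D n (Suc j)" "p l * D n (Suc j) \<le> D (Suc n) j" for n
      using D_Suc_ge_down[of j n] Suc.hyps Suc.prems by (simp_all add: D_nonneg)
    show "(\<lambda>n. D n j) \<longlonglongrightarrow> 0"
      using Suc.IH Suc.prems by simp
  qed (rule p_l_pos)
qed

lemma harmonic_tendsto_ends:
  assumes "harmonic v"
  shows "(\<lambda>n. D n 1 * v 1 + D n m * v m) \<longlonglongrightarrow> v 2"
proof -
  have "{1..m} = insert 1 (insert m {2..m - 1})"
    using m_ge_3 by auto
  then have ends: "D n 1 * v 1 + D n m * v m = v 2 - (\<Sum>j\<in>{2..m - 1}. D n j * v j)" for n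
    using D_expectation[OF assms, of n] m_ge_3 by simp
  have "(\<lambda>n. v 2 - (\<Sum>j\<in>{2..m - 1}. D n j * v j)) \<longlonglongrightarrow> v 2 - 0"
    by (intro tendsto_diff tendsto_const tendsto_null_sum tendsto_mult_left_zero
        D_transient_tendsto_zero) simp_all
  then show ?thesis
    unfolding ends by simp
qed

text \<open>The factors A and 1 / B compensate the slowed-down moves out of the states 2 and m - 1.\<close>

definition increment :: "nat \<Rightarrow> real" where
  "increment i = (if i = 1 then 1 else A) * (p l / p h) ^ (i - 1) / (if i = m - 1 then B else 1)"

definition w :: "nat \<Rightarrow> real" where
  "w j = (\<Sum>i\<in>{1..<j}. increment i)"

lemma w_Suc: "1 \<le> j \<Longrightarrow> w (Suc j) = w j + increment j"
  by (simp add: w_def)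

lemma increment_balance:
  assumes "2 \<le> i" "i \<le> m - 1"
  shows "p l * (if i = 2 then A else 1) * increment (i - 1)
    = p h * (if i = m - 1 then B else 1) * increment i"
proof -
  obtain k where k: "i = k + 2"
    using assms(1) le_Suc_ex by (metis add.commute)
  have "i - 1 \<noteq> m - 1"
    using assms by auto
  moreover have "p l * (p l / p h) ^ k = p h * (p l / p h) ^ (k + 1)"
    using p_h_pos by simp
  ultimately show ?thesis
    using B_pos unfolding increment_def k by (cases k) (auto simp: field_simps)
qed

lemma harmonic_w: "harmonic w"
  unfolding harmonic_def
proof
  fix i assume "i \<in> {1..m}"
  then consider "i = 1 \<or> i = m" | "2 \<le> i" "i \<le> m - 1"
    by fastforce
  then show "(\<Sum>j\<in>{1..m}. kernel i j * w j) = w i"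
  proof cases
    case 2
    then have "w i - w (i - 1) = increment (i - 1)" "w (i + 1) - w i = increment i"
      using w_Suc[of "i - 1"] w_Suc[of i] by simp_all
    then show ?thesis
      using increment_balance[OF 2] unfolding kernel_expectation_interior[OF 2] by simp
  qed (rule kernel_expectation_absorbing)
qed

lemma increment_1: "increment 1 = 1"
proof -
  have "1 \<noteq> m - 1"
    using m_ge_3 by linarith
  then show ?thesis
    by (simp add: increment_def)
qed

lemma w_1: "w 1 = 0"
  by (simp add: w_def)

lemma w_2: "w 2 = 1"
  using w_Suc[of 1] w_1 increment_1 by (simp add: numeral_2_eq_2)

lemma w_m: "w m = 1 + A * (\<Sum>i\<in>{2..<m - 1}. (p l / p h) ^ (i - 1)) + A / B * (p l / p h) ^ (m - 2)"
proof -
  have "{1..<m} = insert 1 (insert (m - 1) {2..<m - 1})" "1 \<noteq> m - 1"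
    using m_ge_3 by auto
  moreover have "increment (m - 1) = A / B * (p l / p h) ^ (m - 2)"
    using \<open>1 \<noteq> m - 1\<close> by (simp add: increment_def numeral_2_eq_2)
  moreover have "increment i = A * (p l / p h) ^ (i - 1)" if "i \<in> {2..<m - 1}" for i
    using that by (simp add: increment_def)
  ultimately show ?thesis
    using increment_1 unfolding w_def by (simp add: sum_distrib_left)
qed

lemma w_m_pos: "0 < w m"
proof -
  have "0 \<le> A * (\<Sum>i\<in>{2..<m - 1}. (p l / p h) ^ (i - 1))" "0 \<le> A / B * (p l / p h) ^ (m - 2)"
    using A_pos B_pos p_l_pos p_h_pos by (simp_all add: sum_nonneg)
  then show ?thesis
    unfolding w_m by linarith
qed

lemma D_m_tendsto: "(\<lambda>n. D n m) \<longlonglongrightarrow> 1 / w m"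
proof -
  have "(\<lambda>n. D n m * w m) \<longlonglongrightarrow> 1"
    using harmonic_tendsto_ends[OF harmonic_w] unfolding w_1 w_2 by simp
  then have "(\<lambda>n. D n m * w m / w m) \<longlonglongrightarrow> 1 / w m"
    using w_m_pos by (intro tendsto_divide tendsto_const) auto
  then show ?thesis
    using w_m_pos by simp
qed

lemma D_1_tendsto: "(\<lambda>n. D n 1) \<longlonglongrightarrow> 1 - 1 / w m"
proof -
  have "(\<lambda>n. D n 1 + D n m) \<longlonglongrightarrow> 1"
    using harmonic_tendsto_ends[OF harmonic_const[of 1]] by simp
  then have "(\<lambda>n. (D n 1 + D n m) - D n m) \<longlonglongrightarrow> 1 - 1 / w m"
    by (intro tendsto_diff D_m_tendsto)
  then show ?thesis
    by simp
qed

lemma absorb_prob_m: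
  "absorb_prob piH piL h l m e1 e2 p m
    = 1 / (1 + A * (\<Sum>i\<in>{2..<m - 1}. (p l / p h) ^ (i - 1)) + A / B * (p l / p h) ^ (m - 2))"
  unfolding absorb_prob_def w_m[symmetric] by (rule limI[OF D_m_tendsto])

lemma absorb_prob_1:
  "absorb_prob piH piL h l m e1 e2 p 1
    = 1 - 1 / (1 + A * (\<Sum>i\<in>{2..<m - 1}. (p l / p h) ^ (i - 1)) + A / B * (p l / p h) ^ (m - 2))"
  unfolding absorb_prob_def w_m[symmetric] by (rule limI[OF D_1_tendsto])

end

lemma c_const_pos:
  assumes "0 < piH s" "0 < piL s"
  shows "0 < c_const piH piL s m"
  using assms by (simp add: c_const_def)

lemma absorb_prob_scaled_tendsto:
  fixes piH piL p :: "'s::finite \<Rightarrow> real"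
  assumes "m \<ge> 3" "h \<noteq> l" "\<And>s. 0 \<le> p s" "0 < p l" "0 < p h" "sum p UNIV = 1"
    and "0 < c_const piH piL h m" "0 < c_const piH piL l m" "0 < k1" "0 < k2"
  defines "Q \<equiv> k1 / k2 * (c_const piH piL h m / c_const piH piL l m * (p l / p h) ^ (m - 2))"
    and "R \<equiv> k2 / k1 * (c_const piH piL l m / c_const piH piL h m * (p h / p l) ^ (m - 2))"
  shows "((\<lambda>\<epsilon>. absorb_prob piH piL h l m (k1 * \<epsilon>) (k2 * \<epsilon>) p m) \<longlongrightarrow> R / (1 + R)) (at_right 0)"
    and "((\<lambda>\<epsilon>. absorb_prob piH piL h l m (k1 * \<epsilon>) (k2 * \<epsilon>) p 1) \<longlongrightarrow> Q / (1 + Q)) (at_right 0)"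
proof -
  define ch cl where "ch = c_const piH piL h m" and "cl = c_const piH piL l m"
  define S where "S = (\<Sum>i\<in>{2..<m - 1}. (p l / p h) ^ (i - 1))"
  define F where "F \<epsilon> = 1 + ch * (k1 * \<epsilon>) * S + Q" for \<epsilon>
  have Q_pos: "0 < Q"
    unfolding Q_def using assms(4,5,7-10) by simp
  have "R = 1 / Q"
    unfolding R_def Q_def by (simp add: power_divide)
  have F_tendsto: "(F \<longlongrightarrow> 1 + Q) (at_right 0)"
    unfolding F_def by (rule tendsto_eq_intros refl)+ simp
  have "\<forall>\<^sub>F \<epsilon> in at_right 0. protocol_walk piH piL h l m (k1 * \<epsilon>) (k2 * \<epsilon>) p"
  proof -
    have "\<forall>\<^sub>F \<epsilon> in at_right 0. c * (k * \<epsilon>) < 1" for c k :: real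
      by (intro order_tendstoD(2)[of _ 0] tendsto_mult_right_zero tendsto_ident_at) simp
    then have "\<forall>\<^sub>F \<epsilon> in at_right 0. ch * (k1 * \<epsilon>) < 1 \<and> cl * (k2 * \<epsilon>) < 1"
      by (intro eventually_conj)
    moreover have "\<forall>\<^sub>F \<epsilon> in at_right 0. 0 < (\<epsilon>::real)"
      by (rule eventually_at_right_less)
    ultimately show ?thesis
      by eventually_elim (use assms in \<open>unfold_locales, auto simp: ch_def cl_def\<close>)
  qed
  then have "\<forall>\<^sub>F \<epsilon> in at_right 0. absorb_prob piH piL h l m (k1 * \<epsilon>) (k2 * \<epsilon>) p m = 1 / F \<epsilon>
      \<and> absorb_prob piH piL h l m (k1 * \<epsilon>) (k2 * \<epsilon>) p 1 = 1 - 1 / F \<epsilon>"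
  proof eventually_elim
    case (elim \<epsilon>)
    then have "\<epsilon> \<noteq> 0"
      by (auto simp: protocol_walk_def)
    then have "ch * (k1 * \<epsilon>) / (cl * (k2 * \<epsilon>)) * x = k1 / k2 * (ch / cl * x)" for x
      by (simp add: ac_simps)
    then show ?case
      unfolding protocol_walk.absorb_prob_m[OF elim, folded ch_def cl_def]
        protocol_walk.absorb_prob_1[OF elim, folded ch_def cl_def] F_def Q_def S_def ch_def cl_def
      by simp
  qed
  then have ev_m: "\<forall>\<^sub>F \<epsilon> in at_right 0. absorb_prob piH piL h l m (k1 * \<epsilon>) (k2 * \<epsilon>) p m = 1 / F \<epsilon>"
    and ev_1: "\<forall>\<^sub>F \<epsilon> in at_right 0. absorb_prob piH piL h l m (k1 * \<epsilon>) (k2 * \<epsilon>) p 1 = 1 - 1 / F \<epsilon>"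
    by (auto elim: eventually_mono)
  have lim_inverse: "((\<lambda>\<epsilon>. 1 / F \<epsilon>) \<longlongrightarrow> 1 / (1 + Q)) (at_right 0)"
    using Q_pos by (intro tendsto_divide tendsto_const F_tendsto) simp
  then have lim_complement: "((\<lambda>\<epsilon>. 1 - 1 / F \<epsilon>) \<longlongrightarrow> 1 - 1 / (1 + Q)) (at_right 0)"
    by (intro tendsto_diff tendsto_const)
  have limit_eqs: "1 / (1 + Q) = R / (1 + R)" "1 - 1 / (1 + Q) = Q / (1 + Q)"
    using Q_pos unfolding \<open>R = 1 / Q\<close> by (simp_all add: field_simps)
  show "((\<lambda>\<epsilon>. absorb_prob piH piL h l m (k1 * \<epsilon>) (k2 * \<epsilon>) p m) \<longlongrightarrow> R / (1 + R)) (at_right 0)"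
    and "((\<lambda>\<epsilon>. absorb_prob piH piL h l m (k1 * \<epsilon>) (k2 * \<epsilon>) p 1) \<longlongrightarrow> Q / (1 + Q)) (at_right 0)"
    unfolding tendsto_cong[OF ev_m] tendsto_cong[OF ev_1]
    using lim_inverse[unfolded limit_eqs(1)] lim_complement[unfolded limit_eqs(2)] .
qed

lemma likelihood_ratio_argmax_ne_argmin:
  fixes piH piL :: "'s::finite \<Rightarrow> real"
  assumes "\<forall>s. piL s > 0" "sum piH UNIV = 1" "sum piL UNIV = 1" "piH \<noteq> piL"
    and "piH h / piL h = Max (range (\<lambda>s. piH s / piL s))"
    and "piH l / piL l = Min (range (\<lambda>s. piH s / piL s))"
  shows "h \<noteq> l"
proof
  assume "h = l"
  define r where "r = piH h / piL h"
  have "piH s / piL s \<le> Max (range (\<lambda>s. piH s / piL s))"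
    and "Min (range (\<lambda>s. piH s / piL s)) \<le> piH s / piL s" for s
    by (rule Max_ge, simp, simp) (rule Min_le, simp, simp)
  then have "piH s / piL s = r" for s
    using assms(5,6) \<open>h = l\<close> unfolding r_def by (metis antisym)
  then have piH_eq: "piH = (\<lambda>s. r * piL s)"
    using assms(1) by (metis divide_eq_eq less_irrefl)
  then have "r = 1"
    using assms(2,3) by (simp flip: sum_distrib_left)
  then show False
    using piH_eq assms(4) by simp
qed

lemma c_const_ratio_mult_power:
  assumes "0 < piH h" "0 < piL h" "0 < piH l" "0 < piL l" "0 < x" "2 \<le> m"
  shows "c_const piH piL h m / c_const piH piL l m * x ^ (m - 2)
    = (piH h * piL h / (piH l * piL l) * x\<^sup>2) powr ((real m - 2) / 2)"
proof -
  have "2 * ((real m - 2) / 2) = real (m - 2)"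
    using assms(6) by (simp add: of_nat_diff)
  then have "x ^ (m - 2) = x powr (2 * ((real m - 2) / 2))"
    using assms(5) by (simp only: powr_realpow)
  also have "\<dots> = (x powr 2) powr ((real m - 2) / 2)"
    by (simp only: powr_powr)
  also have "\<dots> = (x\<^sup>2) powr ((real m - 2) / 2)"
    using assms(5) by simp
  finally have "x ^ (m - 2) = (x\<^sup>2) powr ((real m - 2) / 2)" .
  then show ?thesis
    unfolding c_const_def using assms(1-4)
    by (simp only: powr_divide[symmetric] powr_mult[symmetric] mult_pos_pos less_imp_le
        divide_nonneg_nonneg zero_le_power2)
qed

lemma c_const_ratio_likelihood:
  assumes "0 < piH h" "0 < piL h" "0 < piH l" "0 < piL l" "2 \<le> m"
  defines "\<gamma> \<equiv> (piH h / piL h) / (piH l / piL l)" and "t \<equiv> (real m - 2) / 2"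
  shows "c_const piH piL l m / c_const piH piL h m * (piH h / piH l) ^ (m - 2) = \<gamma> powr t"
    and "c_const piH piL h m / c_const piH piL l m * (piL l / piL h) ^ (m - 2) = \<gamma> powr t"
proof -
  have "piH l * piL l / (piH h * piL h) * (piH h / piH l)\<^sup>2 = \<gamma>"
    and "piH h * piL h / (piH l * piL l) * (piL l / piL h)\<^sup>2 = \<gamma>"
    using assms(1-4) by (simp_all add: \<gamma>_def field_simps power2_eq_square)
  then show "c_const piH piL l m / c_const piH piL h m * (piH h / piH l) ^ (m - 2) = \<gamma> powr t"
    and "c_const piH piL h m / c_const piH piL l m * (piL l / piL h) ^ (m - 2) = \<gamma> powr t"
    unfolding t_def using c_const_ratio_mult_power[OF assms(3,4,1,2) _ assms(5), of "piH h / piH l"]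
      c_const_ratio_mult_power[OF assms(1-4) _ assms(5), of "piL l / piL h"] assms(1-4)
    by simp_all
qed

theorem mainTheorem13:
  fixes piH piL :: "'s::finite \<Rightarrow> real" and h l :: 's and m :: nat and k1 k2 :: real
  assumes "m \<ge> 3"
    and "\<forall>s. piH s > 0" and "\<forall>s. piL s > 0"
    and "(\<Sum>s\<in>UNIV. piH s) = 1" and "(\<Sum>s\<in>UNIV. piL s) = 1"
    and "piH \<noteq> piL"
    and "piH h / piL h = Max (range (\<lambda>s. piH s / piL s))"
    and "piH l / piL l = Min (range (\<lambda>s. piH s / piL s))"
    and "k1 > 0" and "k2 > 0"
  shows "let \<gamma> = Max (range (\<lambda>s. piH s / piL s)) / Min (range (\<lambda>s. piH s / piL s)) in
    ((\<lambda>\<epsilon>. absorb_prob piH piL h l m (k1 * \<epsilon>) (k2 * \<epsilon>) piH m)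
       \<longlongrightarrow> (k2 / k1 * \<gamma> powr ((real m - 2) / 2)) / (1 + k2 / k1 * \<gamma> powr ((real m - 2) / 2)))
      (at_right 0)
    \<and> ((\<lambda>\<epsilon>. absorb_prob piH piL h l m (k1 * \<epsilon>) (k2 * \<epsilon>) piL 1)
       \<longlongrightarrow> (k1 / k2 * \<gamma> powr ((real m - 2) / 2)) / (1 + k1 / k2 * \<gamma> powr ((real m - 2) / 2)))
      (at_right 0)"
proof -
  have piH_pos: "\<And>s. 0 < piH s" and piL_pos: "\<And>s. 0 < piL s"
    using assms(2,3) by auto
  have "h \<noteq> l"
    using assms(3-8) by (rule likelihood_ratio_argmax_ne_argmin)
  have "2 \<le> m"
    using assms(1) by simp
  note ratio =
    c_const_ratio_likelihood[OF piH_pos[of h] piL_pos[of h] piH_pos[of l] piL_pos[of l] this]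
  have c_pos: "0 < c_const piH piL h m" "0 < c_const piH piL l m"
    using piH_pos piL_pos by (simp_all add: c_const_pos)
  have "Max (range (\<lambda>s. piH s / piL s)) / Min (range (\<lambda>s. piH s / piL s))
      = (piH h / piL h) / (piH l / piL l)"
    unfolding assms(7,8) ..
  with absorb_prob_scaled_tendsto(1)[of m h l piH piH piL k1 k2, unfolded ratio]
    absorb_prob_scaled_tendsto(2)[of m h l piL piH piL k1 k2, unfolded ratio]
  show ?thesis
    using assms(1,4,5,9,10) \<open>h \<noteq> l\<close> piH_pos piL_pos c_pos by (simp add: Let_def less_imp_le)
qed

end
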